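(* Let $A$ be an irreducible $\{0,1\}$-matrix which is not a permutation matrix, and let $\mathcal{C}$ be a right Markov code for $(X_A,\sigma_A)$. Then the one-sided topological Markov shift $(X_{A(\mathcal{C})},\sigma_{A(\mathcal{C})})$ is continuously orbit equivalent to $(X_A,\sigma_A)$.
   Context: For an $N\times N$ matrix $A=[A(i,j)]_{i,j=1}^N$ with entries in $\{0,1\}$, put $\Sigma_A=\{1,\dots,N\}$ and let $X_A$ be the set of sequences $(x_n)_{n\in\mathbb{N}}$ in $\Sigma_A$ with $A(x_n,x_{n+1})=1$ for all $n$, with the product topology and the shift $\sigma_A((x_n)_n)=(x_{n+1})_n$. $B_k(X_A)$ is the set of admissible words of length $k$, $B_0(X_A)$ the empty word, $B_*(X_A)=\bigcup_{k\ge0}B_k(X_A)$. For a word $w=w_1\cdots w_\ell$ put $\sigma_A(w)=w_2\cdots w_\ell$. A code is a nonempty $\mathcal{C}\subset B_*(X_A)$ such that any equality $\omega(i_1)\cdots\omega(i_k)=\omega(j_1)\cdots\omega(j_n)$ of concatenations of words of $\mathcal{C}$ forces $n=k$ and $\omega(i_m)=\omega(j_m)$ for all $m$; a prefix code is a code in which no word is a prefix of another. A finite prefix code $\mathcal{C}=\{\omega(1),\dots,\omega(M)\}\subset B_*(X_A)$, $\Sigma_{A(\mathcal{C})}=\{1,\dots,M\}$, is a right Markov code for $(X_A,\sigma_A)$ if: (i) for every $\gamma\in B_*(X_A)$ there is $\eta\in B_*(X_A)$ with $\gamma\eta\in B_*(X_A)$ and a unique finite sequence $(i_1,\dots,i_k)$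 in $\Sigma_{A(\mathcal{C})}$ with $\gamma\eta=\omega(i_1)\cdots\omega(i_k)$; (ii) there is $L\in\mathbb{N}$ such that for all $i_1,\dots,i_L\in\Sigma_{A(\mathcal{C})}$ with $\omega(i_1)\cdots\omega(i_L)\in B_*(X_A)$ there exist $j_1,\dots,j_k\in\Sigma_{A(\mathcal{C})}$ with $\sigma_A(\omega(i_1))\omega(i_2)\cdots\omega(i_L)=\omega(j_1)\cdots\omega(j_k)$; (iii) for every $i,j$ there are $n_1,\dots,n_l\in\Sigma_{A(\mathcal{C})}$ with $\omega(i)\omega(n_1)\cdots\omega(n_l)\omega(j)\in B_*(X_A)$. $A(\mathcal{C})$ is the $M\times M$ matrix with $A(\mathcal{C})(i,j)=A(r(\omega(i)),s(\omega(j)))$, where $s(\omega(i)),r(\omega(i))$ denote the first and last symbols of $\omega(i)$. $(X_A,\sigma_A)$ and $(X_B,\sigma_B)$ are continuously orbit equivalent if there exist a homeomorphism $h:X_A\to X_B$ and continuous maps $k_1,l_1:X_A\to\mathbb{Z}_+$, $k_2,l_2:X_B\to\mathbb{Z}_+$ with $\sigma_B^{k_1(x)}(h(\sigma_A(x)))=\sigma_B^{l_1(x)}(h(x))$ for $x\in X_A$ and $\sigma_A^{k_2(y)}(h^{-1}(\sigma_B(y)))=\sigma_A^{l_2(y)}(h^{-1}(y))$ for $y\in X_B$. *)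

theory Defs
  imports "HOL-Analysis.Analysis"
begin

text \<open>An N x N matrix is represented as a function nat => nat => nat, only its
entries at indices in {1..N} being relevant. Symbols are Sigma_A = {1..N}.\<close>

definition zero_one_matrix :: "nat \<Rightarrow> (nat \<Rightarrow> nat \<Rightarrow> nat) \<Rightarrow> bool" where
  "zero_one_matrix N A \<longleftrightarrow> (\<forall>i\<in>{1..N}. \<forall>j\<in>{1..N}. A i j \<in> {0, 1})"

fun matpow :: "nat \<Rightarrow> (nat \<Rightarrow> nat \<Rightarrow> nat) \<Rightarrow> nat \<Rightarrow> nat \<Rightarrow> nat \<Rightarrow> nat" where
  "matpow N A 0 = (\<lambda>i j. if i = j then 1 else 0)"
| "matpow N A (Suc n) = (\<lambda>i j. \<Sum>k\<in>{1..N}. matpow N A n i k * A k j)"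

definition irreducible_matrix :: "nat \<Rightarrow> (nat \<Rightarrow> nat \<Rightarrow> nat) \<Rightarrow> bool" where
  "irreducible_matrix N A \<longleftrightarrow> (\<forall>i\<in>{1..N}. \<forall>j\<in>{1..N}. \<exists>n>0. matpow N A n i j > 0)"

definition permutation_matrix :: "nat \<Rightarrow> (nat \<Rightarrow> nat \<Rightarrow> nat) \<Rightarrow> bool" where
  "permutation_matrix N A \<longleftrightarrow> zero_one_matrix N A \<and>
     (\<forall>i\<in>{1..N}. card {j\<in>{1..N}. A i j = 1} = 1) \<and>
     (\<forall>j\<in>{1..N}. card {i\<in>{1..N}. A i j = 1} = 1)"

definition XA :: "nat \<Rightarrow> (nat \<Rightarrow> nat \<Rightarrow> nat) \<Rightarrow> (nat \<Rightarrow> nat) set" where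
  "XA N A = {x. \<forall>n. x n \<in> {1..N} \<and> A (x n) (x (Suc n)) = 1}"

definition topXA :: "nat \<Rightarrow> (nat \<Rightarrow> nat \<Rightarrow> nat) \<Rightarrow> (nat \<Rightarrow> nat) topology" where
  "topXA N A = subtopology (product_topology (\<lambda>_. discrete_topology {1..N}) UNIV) (XA N A)"

definition shift :: "(nat \<Rightarrow> nat) \<Rightarrow> (nat \<Rightarrow> nat)" where
  "shift x = (\<lambda>n. x (Suc n))"

definition Bstar :: "nat \<Rightarrow> (nat \<Rightarrow> nat \<Rightarrow> nat) \<Rightarrow> nat list set" where
  "Bstar N A = {w. set w \<subseteq> {1..N} \<and> (\<forall>k. Suc k < length w \<longrightarrow> A (w ! k) (w ! Suc k) = 1)}"

definition is_code :: "nat \<Rightarrow> (nat \<Rightarrow> nat \<Rightarrow> nat) \<Rightarrow> nat list set \<Rightarrow> bool" where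
  "is_code N A C \<longleftrightarrow> C \<noteq> {} \<and> C \<subseteq> Bstar N A \<and>
     (\<forall>us vs. set us \<subseteq> C \<longrightarrow> set vs \<subseteq> C \<longrightarrow> concat us = concat vs \<longrightarrow> us = vs)"

definition is_prefix_code :: "nat \<Rightarrow> (nat \<Rightarrow> nat \<Rightarrow> nat) \<Rightarrow> nat list set \<Rightarrow> bool" where
  "is_prefix_code N A C \<longleftrightarrow> is_code N A C \<and>
     (\<forall>u\<in>C. \<forall>v\<in>C. u \<noteq> v \<longrightarrow> \<not> (\<exists>t. v = u @ t))"

definition right_markov_code ::
  "nat \<Rightarrow> (nat \<Rightarrow> nat \<Rightarrow> nat) \<Rightarrow> nat \<Rightarrow> (nat \<Rightarrow> nat list) \<Rightarrow> bool" where
  "right_markov_code N A M \<omega> \<longleftrightarrow>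
     inj_on \<omega> {1..M} \<and> is_prefix_code N A (\<omega> ` {1..M}) \<and>
     \<comment> \<open>(i)\<close>
     (\<forall>\<gamma>\<in>Bstar N A. \<exists>\<eta>. \<gamma> @ \<eta> \<in> Bstar N A \<and>
        (\<exists>!is. set is \<subseteq> {1..M} \<and> \<gamma> @ \<eta> = concat (map \<omega> is))) \<and>
     \<comment> \<open>(ii)\<close>
     (\<exists>L\<ge>1. \<forall>is. length is = L \<longrightarrow> set is \<subseteq> {1..M} \<longrightarrow> concat (map \<omega> is) \<in> Bstar N A \<longrightarrow>
        (\<exists>js. set js \<subseteq> {1..M} \<and>
           tl (\<omega> (hd is)) @ concat (map \<omega> (tl is)) = concat (map \<omega> js))) \<and>
     \<comment> \<open>(iii)\<close>
     (\<forall>i\<in>{1..M}. \<forall>j\<in>{1..M}. \<exists>ns. set ns \<subseteq> {1..M} \<and>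
        \<omega> i @ concat (map \<omega> ns) @ \<omega> j \<in> Bstar N A)"

definition code_matrix :: "(nat \<Rightarrow> nat \<Rightarrow> nat) \<Rightarrow> (nat \<Rightarrow> nat list) \<Rightarrow> nat \<Rightarrow> nat \<Rightarrow> nat" where
  "code_matrix A \<omega> i j = A (last (\<omega> i)) (hd (\<omega> j))"

definition cont_orbit_equiv ::
  "nat \<Rightarrow> (nat \<Rightarrow> nat \<Rightarrow> nat) \<Rightarrow> nat \<Rightarrow> (nat \<Rightarrow> nat \<Rightarrow> nat) \<Rightarrow> bool" where
  "cont_orbit_equiv N A M B \<longleftrightarrow>
     (\<exists>h g k1 l1 k2 l2.
        homeomorphic_maps (topXA N A) (topXA M B) h g \<and>
        continuous_map (topXA N A) (discrete_topology (UNIV::nat set)) k1 \<and>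
        continuous_map (topXA N A) (discrete_topology (UNIV::nat set)) l1 \<and>
        continuous_map (topXA M B) (discrete_topology (UNIV::nat set)) k2 \<and>
        continuous_map (topXA M B) (discrete_topology (UNIV::nat set)) l2 \<and>
        (\<forall>x\<in>XA N A. (shift ^^ k1 x) (h (shift x)) = (shift ^^ l1 x) (h x)) \<and>
        (\<forall>y\<in>XA M B. (shift ^^ k2 y) (g (shift y)) = (shift ^^ l2 y) (g y)))"

end

theory Submission
  imports Defs
begin

text \<open>
  The coding map sends y \<in> X_{A(C)} to the concatenation \<omega>(y_0)\<omega>(y_1)\<omega>(y_2)... . The matrix A(C)
  allows the transition y_n y_{n+1} exactly when A allows the junction of \<omega>(y_n) and \<omega>(y_{n+1}),
  so a sequence of codeword indices lies in X_{A(C)} iff its coding lies in X_A. As C is a prefix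
  code, a point of X_A begins with at most one codeword, which makes the coding map injective; by
  condition (i) every admissible word, hence every long enough prefix of a point of X_A, begins
  with some codeword, so greedy parsing makes it surjective. A codeword has length at most
  max_length, so coordinate k of the decoded sequence only depends on the first max_length(k+1)
  coordinates, and the coding map is a homeomorphism.

  The coding of \<sigma>(y) is \<sigma>_A^{|\<omega>(y_0)|} of the coding of y. Conversely, by condition (ii)
  deleting the first symbol of \<omega>(y_0)...\<omega>(y_{L-1}) leaves a word \<omega>(j_1)...\<omega>(j_k), so \<sigma>_A of
  the coding of y is the coding of j_1...j_k \<sigma>^L(y); the length k only depends on y_0...y_{L-1}
  and is therefore continuous.
\<close>

section \<open>Prepending a word to a sequence\<close>

definition prepend :: "'a list \<Rightarrow> (nat \<Rightarrow> 'a) \<Rightarrow> nat \<Rightarrow> 'a" where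
  "prepend w z n = (if n < length w then w ! n else z (n - length w))"

lemma prepend_Nil [simp]: "prepend [] z = z"
  by (simp add: prepend_def fun_eq_iff)

lemma prepend_append: "prepend (u @ v) z = prepend u (prepend v z)"
  by (auto simp: prepend_def nth_append fun_eq_iff)

lemma prepend_Cons_0 [simp]: "prepend (a # w) z 0 = a"
  by (simp add: prepend_def)

lemma prepend_Cons_Suc [simp]: "prepend (a # w) z (Suc n) = prepend w z n"
  by (simp add: prepend_def)

lemma map_prepend_upt [simp]: "map (prepend w z) [0..<length w] = w"
  by (rule nth_equalityI) (simp_all add: prepend_def)

lemma prepend_map_upt: "prepend (map x [0..<k]) (\<lambda>n. x (n + k)) = x"
  by (simp add: prepend_def fun_eq_iff)

lemma comp_prepend: "(\<lambda>n. f (prepend w z n)) = prepend (map f w) (\<lambda>n. f (z n))"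
  by (simp add: prepend_def fun_eq_iff)

lemma prepend_pred: "\<forall>a\<in>set w. P a \<Longrightarrow> \<forall>n. P (z n) \<Longrightarrow> P (prepend w z n)"
  by (simp add: prepend_def)

lemma prepend_last: "w \<noteq> [] \<Longrightarrow> prepend w z (length w - 1) = last w"
  by (simp add: prepend_def last_conv_nth)

lemma prepend_hd: "w \<noteq> [] \<Longrightarrow> prepend w z 0 = hd w"
  by (simp add: prepend_def hd_conv_nth)

lemma prepend_length: "prepend w z (length w) = z 0"
  by (simp add: prepend_def)

lemma range_prepend: "set w \<subseteq> S \<Longrightarrow> range z \<subseteq> S \<Longrightarrow> range (prepend w z) \<subseteq> S"
  by (auto simp: prepend_def)

lemma funpow_shift: "(shift ^^ k) x = (\<lambda>n. x (n + k))"
  by (induction k) (auto simp: shift_def)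

lemma funpow_shift_prepend [simp]: "(shift ^^ length w) (prepend w z) = z"
  by (simp add: funpow_shift prepend_def)

lemma shift_prepend: "w \<noteq> [] \<Longrightarrow> shift (prepend w z) = prepend (tl w) z"
  by (cases w) (simp_all add: shift_def)

lemma range_funpow_shift: "range y \<subseteq> S \<Longrightarrow> range ((shift ^^ k) y) \<subseteq> S"
  by (simp add: funpow_shift image_subset_iff)

section \<open>Infinite concatenation of words\<close>

text \<open>Only meaningful if no w n is empty: otherwise concat (map w [0..<Suc n]) may be shorter than n + 1.\<close>

definition infinite_concat :: "(nat \<Rightarrow> 'a list) \<Rightarrow> nat \<Rightarrow> 'a" where
  "infinite_concat w n = concat (map w [0..<Suc n]) ! n"

lemma length_concat_map_upt_ge:
  assumes "\<And>n. w n \<noteq> []"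
  shows "k \<le> length (concat (map w [0..<k]))"
proof (induction k)
  case (Suc k)
  have "0 < length (w k)" using assms by simp
  moreover have "length (concat (map w [0..<Suc k])) = length (concat (map w [0..<k])) + length (w k)"
    by simp
  ultimately show ?case using Suc.IH by linarith
qed simp

lemma nth_concat_map_upt_mono:
  assumes "k \<le> k'" and "n < length (concat (map w [0..<k]))"
  shows "concat (map w [0..<k']) ! n = concat (map w [0..<k]) ! n"
proof -
  have "[0..<k'] = [0..<k] @ [k..<k']"
    using upt_add_eq_append[of 0 k "k' - k"] assms(1) by simp
  then show ?thesis using assms(2) by (simp only: map_append concat_append nth_append_left)
qed

lemma infinite_concat_nth:
  assumes "\<And>n. w n \<noteq> []" and "n < length (concat (map w [0..<k]))"
  shows "infinite_concat w n = concat (map w [0..<k]) ! n"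
  unfolding infinite_concat_def
proof (cases "k \<le> Suc n")
  case True
  then show "concat (map w [0..<Suc n]) ! n = concat (map w [0..<k]) ! n"
    using assms(2) by (rule nth_concat_map_upt_mono)
next
  case False
  then have "Suc n \<le> k" by simp
  moreover have "n < length (concat (map w [0..<Suc n]))"
    using length_concat_map_upt_ge[of w "Suc n", OF assms(1)] by simp
  ultimately show "concat (map w [0..<Suc n]) ! n = concat (map w [0..<k]) ! n"
    by (rule nth_concat_map_upt_mono[symmetric])
qed

lemma infinite_concat_unfold:
  assumes "\<And>n. w n \<noteq> []"
  shows "infinite_concat w = prepend (w 0) (infinite_concat (\<lambda>n. w (Suc n)))"
proof
  fix n
  have split: "concat (map w [0..<Suc n]) = w 0 @ concat (map (\<lambda>n. w (Suc n)) [0..<n])"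
    by (simp only: map_upt_Suc) simp
  show "infinite_concat w n = prepend (w 0) (infinite_concat (\<lambda>n. w (Suc n))) n"
  proof (cases "n < length (w 0)")
    case True
    then show ?thesis by (simp only: infinite_concat_def split) (simp add: prepend_def nth_append)
  next
    case False
    have "0 < length (w 0)" using assms by simp
    with False have "n - length (w 0) < n" by linarith
    also have "n \<le> length (concat (map (\<lambda>n. w (Suc n)) [0..<n]))"
      by (rule length_concat_map_upt_ge) (rule assms)
    finally have tail: "concat (map (\<lambda>n. w (Suc n)) [0..<n]) ! (n - length (w 0))
        = infinite_concat (\<lambda>n. w (Suc n)) (n - length (w 0))"
      using assms by (intro infinite_concat_nth[symmetric])
    have "infinite_concat w n = (w 0 @ concat (map (\<lambda>n. w (Suc n)) [0..<n])) ! n"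
      by (simp only: infinite_concat_def split)
    also have "\<dots> = infinite_concat (\<lambda>n. w (Suc n)) (n - length (w 0))"
      using False tail by (simp add: nth_append_right)
    finally show ?thesis using False by (simp add: prepend_def)
  qed
qed

lemma infinite_concat_prepend:
  assumes "\<And>n. w n \<noteq> []" and "[] \<notin> set us"
  shows "infinite_concat (prepend us w) = prepend (concat us) (infinite_concat w)"
  using assms(2)
proof (induction us)
  case (Cons u us)
  have "\<forall>a\<in>set (u # us). a \<noteq> []" using Cons.prems by blast
  moreover have "\<forall>n. w n \<noteq> []" using assms(1) by blast
  ultimately have "prepend (u # us) w n \<noteq> []" for n
    by (rule prepend_pred)
  then have "infinite_concat (prepend (u # us) w) = prepend u (infinite_concat (prepend us w))"
    by (subst infinite_concat_unfold) simp_all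
  with Cons show ?case by (simp add: prepend_append)
qed simp

lemma infinite_concat_greedy_parse:
  assumes parse: "\<And>x. x \<in> S \<Longrightarrow> \<exists>i\<in>I. \<exists>x'\<in>S. w i \<noteq> [] \<and> x = prepend (w i) x'"
    and "x \<in> S"
  shows "\<exists>y. range y \<subseteq> I \<and> infinite_concat (\<lambda>n. w (y n)) = x"
proof -
  obtain c r where cr: "\<And>x. x \<in> S \<Longrightarrow> c x \<in> I \<and> r x \<in> S \<and> w (c x) \<noteq> [] \<and> x = prepend (w (c x)) (r x)"
    using parse by metis
  define rest where "rest k = (r ^^ k) x" for k
  define y where "y k = c (rest k)" for k
  have rest_in: "rest k \<in> S" for k
    by (induction k) (simp_all add: rest_def \<open>x \<in> S\<close> cr)
  have x_eq: "x = prepend (concat (map (\<lambda>n. w (y n)) [0..<k])) (rest k)" for k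
  proof (induction k)
    case (Suc k)
    have "rest k = prepend (w (y k)) (rest (Suc k))"
      using cr[OF rest_in[of k]] by (simp add: y_def rest_def)
    with Suc show ?case by (simp add: prepend_append)
  qed (simp add: rest_def)
  have "infinite_concat (\<lambda>n. w (y n)) n = x n" for n
  proof -
    have "n < length (concat (map (\<lambda>n. w (y n)) [0..<Suc n]))"
      using length_concat_map_upt_ge[of "\<lambda>n. w (y n)" "Suc n"] cr rest_in by (simp add: y_def)
    then show ?thesis using x_eq[of "Suc n"] by (simp add: infinite_concat_def prepend_def)
  qed
  moreover have "range y \<subseteq> I" using cr rest_in by (auto simp: y_def)
  ultimately show ?thesis by blast
qed

section \<open>The one-sided Markov shift X_A and its topology\<close>

lemma shift_in_XA: "x \<in> XA N A \<Longrightarrow> shift x \<in> XA N A"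
  by (simp add: XA_def shift_def)

lemma funpow_shift_in_XA: "x \<in> XA N A \<Longrightarrow> (shift ^^ k) x \<in> XA N A"
  by (simp add: XA_def funpow_shift)

lemma map_upt_in_Bstar: "x \<in> XA N A \<Longrightarrow> map x [i..<j] \<in> Bstar N A"
  by (auto simp: Bstar_def XA_def)

lemma Bstar_Cons_Cons:
  "a # b # w \<in> Bstar N A \<longleftrightarrow> a \<in> {1..N} \<and> A a b = 1 \<and> b # w \<in> Bstar N A"
  by (auto simp: Bstar_def nth_Cons split: nat.splits)

lemma Bstar_singleton [simp]: "[a] \<in> Bstar N A \<longleftrightarrow> a \<in> {1..N}"
  by (simp add: Bstar_def)

lemma Bstar_append:
  assumes "u \<in> Bstar N A" and "v \<in> Bstar N A" and "u \<noteq> []" and "v \<noteq> []"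
    and "A (last u) (hd v) = 1"
  shows "u @ v \<in> Bstar N A"
  using assms
proof (induction u rule: induct_list012)
  case (2 a)
  then show ?case by (cases v) (simp_all add: Bstar_Cons_Cons)
next
  case (3 a b u)
  then show ?case by (simp add: Bstar_Cons_Cons)
qed simp

lemma topspace_topXA [simp]: "topspace (topXA N A) = XA N A"
  by (auto simp: topXA_def topspace_product_topology XA_def)

lemma openin_topXA_cylinder: "openin (topXA N A) {z \<in> XA N A. \<forall>i<n. z i = x i}"
proof (induction n)
  case 0
  then show ?case using openin_topspace[of "topXA N A"] by simp
next
  case (Suc n)
  have "continuous_map (topXA N A) (discrete_topology {1..N}) (\<lambda>z. z n)"
    unfolding topXA_def
    by (intro continuous_map_from_subtopology continuous_map_product_projection) simp
  then have preimage: "openin (topXA N A) {z \<in> XA N A. z n \<in> {x n} \<inter> {1..N}}"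
    using openin_continuous_map_preimage[of _ _ _ "{x n} \<inter> {1..N}"] by fastforce
  have cylinder_Suc: "{z \<in> XA N A. \<forall>i<Suc n. z i = x i}
      = {z \<in> XA N A. \<forall>i<n. z i = x i} \<inter> {z \<in> XA N A. z n \<in> {x n} \<inter> {1..N}}"
    by (auto simp: XA_def less_Suc_eq)
  show ?case unfolding cylinder_Suc by (rule openin_Int[OF Suc.IH preimage])
qed

lemma continuous_map_topXA_discrete:
  assumes "\<And>x. x \<in> XA N A \<Longrightarrow> f x \<in> U"
    and "\<And>x z. x \<in> XA N A \<Longrightarrow> z \<in> XA N A \<Longrightarrow> \<forall>i<n. z i = x i \<Longrightarrow> f z = f x"
  shows "continuous_map (topXA N A) (discrete_topology U) f"
  unfolding continuous_map_def
proof (intro conjI allI impI)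
  show "f \<in> topspace (topXA N A) \<rightarrow> topspace (discrete_topology U)"
    using assms(1) by (simp add: Pi_iff)
  fix V
  show "openin (topXA N A) {x \<in> topspace (topXA N A). f x \<in> V}"
  proof (subst openin_subopen, intro ballI)
    fix x assume x: "x \<in> {x \<in> topspace (topXA N A). f x \<in> V}"
    let ?C = "{z \<in> XA N A. \<forall>i<n. z i = x i}"
    have "?C \<subseteq> {x \<in> topspace (topXA N A). f x \<in> V}"
    proof
      fix z assume z: "z \<in> ?C"
      then have "f z = f x" using x by (intro assms(2)) simp_all
      with x z show "z \<in> {x \<in> topspace (topXA N A). f x \<in> V}" by simp
    qed
    moreover have "x \<in> ?C"
      using x by simp
    ultimately show "\<exists>T. openin (topXA N A) T \<and> x \<in> T \<and> T \<subseteq> {x \<in> topspace (topXA N A). f x \<in> V}"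
      by (intro exI[of _ ?C] conjI openin_topXA_cylinder)
  qed
qed

lemma continuous_map_into_topXA:
  assumes "\<And>x. x \<in> XA M B \<Longrightarrow> f x \<in> XA N A"
    and "\<And>k. \<exists>n. \<forall>x\<in>XA M B. \<forall>z\<in>XA M B. (\<forall>i<n. z i = x i) \<longrightarrow> f z k = f x k"
  shows "continuous_map (topXA M B) (topXA N A) f"
  unfolding topXA_def[of N A] continuous_map_in_subtopology continuous_map_componentwise_UNIV
proof (intro conjI allI)
  fix k
  obtain n where local: "\<forall>x\<in>XA M B. \<forall>z\<in>XA M B. (\<forall>i<n. z i = x i) \<longrightarrow> f z k = f x k"
    using assms(2) by blast
  show "continuous_map (topXA M B) (discrete_topology {1..N}) (\<lambda>x. f x k)"
  proof (rule continuous_map_topXA_discrete)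
    show "f x k \<in> {1..N}" if "x \<in> XA M B" for x
      using assms(1)[OF that] by (simp add: XA_def)
    show "f z k = f x k" if "x \<in> XA M B" "z \<in> XA M B" "\<forall>i<n. z i = x i" for x z
      using local that by blast
  qed
next
  show "f \<in> topspace (topXA M B) \<rightarrow> XA N A"
    using assms(1) by (simp add: Pi_iff)
qed

section \<open>The coding map of a complete prefix code\<close>

locale complete_prefix_code =
  fixes N :: nat and A :: "nat \<Rightarrow> nat \<Rightarrow> nat" and M :: nat and \<omega> :: "nat \<Rightarrow> nat list"
  assumes inj_codewords: "inj_on \<omega> {1..M}"
    and prefix_code: "is_prefix_code N A (\<omega> ` {1..M})"
    and complete: "\<gamma> \<in> Bstar N A \<Longrightarrow> \<exists>\<eta> ks. set ks \<subseteq> {1..M} \<and> \<gamma> @ \<eta> = concat (map \<omega> ks)"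
begin

abbreviation AC :: "nat \<Rightarrow> nat \<Rightarrow> nat" where
  "AC \<equiv> code_matrix A \<omega>"

lemma codeword_in_Bstar: "i \<in> {1..M} \<Longrightarrow> \<omega> i \<in> Bstar N A"
  using prefix_code by (auto simp: is_prefix_code_def is_code_def)

lemma codeword_nonempty: "i \<in> {1..M} \<Longrightarrow> \<omega> i \<noteq> []"
proof
  assume "i \<in> {1..M}" and "\<omega> i = []"
  then have "set [[]] \<subseteq> \<omega> ` {1..M}" by force
  moreover have unique: "\<forall>us vs. set us \<subseteq> \<omega> ` {1..M} \<longrightarrow> set vs \<subseteq> \<omega> ` {1..M} \<longrightarrow>
      concat us = concat vs \<longrightarrow> us = vs"
    using prefix_code by (simp add: is_prefix_code_def is_code_def)
  ultimately have "[[]] = ([] :: nat list list)"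
    using unique[rule_format, of "[[]]" "[]"] by simp
  then show False by simp
qed

lemma codeword_nonempty_range: "range y \<subseteq> {1..M} \<Longrightarrow> \<omega> (y n) \<noteq> []"
  using codeword_nonempty by blast

lemma codeword_prefix_eq: "i \<in> {1..M} \<Longrightarrow> j \<in> {1..M} \<Longrightarrow> \<omega> j = \<omega> i @ t \<Longrightarrow> i = j"
  using prefix_code inj_codewords unfolding is_prefix_code_def by (metis image_eqI inj_onD)

lemma codeword_prefix_unique:
  assumes "i \<in> {1..M}" and "j \<in> {1..M}"
    and "map x [0..<length (\<omega> i)] = \<omega> i" and "map x [0..<length (\<omega> j)] = \<omega> j"
  shows "i = j"
proof -
  have "\<omega> l = \<omega> k @ drop (length (\<omega> k)) (\<omega> l)"
    if "length (\<omega> k) \<le> length (\<omega> l)" "map x [0..<length (\<omega> k)] = \<omega> k"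
      "map x [0..<length (\<omega> l)] = \<omega> l" for k l
    using that by (metis append_take_drop_id take_map take_upt add_0)
  then show ?thesis
    using assms codeword_prefix_eq by (metis nat_le_linear)
qed

definition max_length :: nat where
  "max_length = Max ((\<lambda>i. length (\<omega> i)) ` {1..M})"

lemma length_codeword_le: "i \<in> {1..M} \<Longrightarrow> length (\<omega> i) \<le> max_length"
  unfolding max_length_def by (rule Max_ge) auto

lemma concat_codewords_in_Bstar: "ks \<in> Bstar M AC \<Longrightarrow> concat (map \<omega> ks) \<in> Bstar N A"
proof (induction ks rule: induct_list012)
  case 1
  then show ?case by (simp add: Bstar_def)
next
  case (2 k)
  then show ?case by (simp add: codeword_in_Bstar)
next
  case (3 k k' ks)
  then have k: "k \<in> {1..M}" and link: "AC k k' = 1" and tail: "k' # ks \<in> Bstar M AC"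
    by (simp_all add: Bstar_Cons_Cons)
  then have k': "k' \<in> {1..M}" by (simp add: Bstar_def)
  have rest: "concat (map \<omega> (k' # ks)) \<in> Bstar N A" using "3.IH"(2) tail .
  show ?case
    using Bstar_append[OF codeword_in_Bstar[OF k] rest] codeword_nonempty[OF k] codeword_nonempty[OF k'] link
    by (simp add: code_matrix_def)
qed

definition code_map :: "(nat \<Rightarrow> nat) \<Rightarrow> nat \<Rightarrow> nat" where
  "code_map y = infinite_concat (\<lambda>n. \<omega> (y n))"

lemma code_map_prepend:
  assumes "set js \<subseteq> {1..M}" and "range z \<subseteq> {1..M}"
  shows "code_map (prepend js z) = prepend (concat (map \<omega> js)) (code_map z)"
proof -
  have "[] \<notin> set (map \<omega> js)" using assms(1) codeword_nonempty by force
  moreover have "\<omega> (z n) \<noteq> []" for n using assms(2) by (rule codeword_nonempty_range)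
  ultimately show ?thesis
    unfolding code_map_def comp_prepend by (simp add: infinite_concat_prepend)
qed

lemma code_map_eq_prepend_upt:
  assumes "range y \<subseteq> {1..M}"
  shows "code_map y = prepend (concat (map \<omega> (map y [0..<k]))) (code_map ((shift ^^ k) y))"
  using code_map_prepend[of "map y [0..<k]" "(shift ^^ k) y"] assms
  by (auto simp: funpow_shift prepend_map_upt)

lemma code_map_unfold:
  "range y \<subseteq> {1..M} \<Longrightarrow> code_map y = prepend (\<omega> (y 0)) (code_map (shift y))"
  using code_map_eq_prepend_upt[of y 1] by simp

lemma code_map_shift:
  "range y \<subseteq> {1..M} \<Longrightarrow> code_map (shift y) = (shift ^^ length (\<omega> (y 0))) (code_map y)"
  by (subst code_map_unfold) simp_all

lemma code_map_begins_with_codeword: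
  "range y \<subseteq> {1..M} \<Longrightarrow> map (code_map y) [0..<length (\<omega> (y 0))] = \<omega> (y 0)"
  by (subst code_map_unfold) simp_all

lemma code_map_in_XA:
  assumes "y \<in> XA M AC"
  shows "code_map y \<in> XA N A"
proof -
  have range: "range y \<subseteq> {1..M}" using assms by (auto simp: XA_def)
  have "code_map y n \<in> {1..N} \<and> A (code_map y n) (code_map y (Suc n)) = 1" for n
  proof -
    define w where "w = concat (map \<omega> (map y [0..<Suc (Suc n)]))"
    have "w \<in> Bstar N A"
      unfolding w_def using assms by (intro concat_codewords_in_Bstar map_upt_in_Bstar)
    then have w_symbols: "set w \<subseteq> {1..N}"
      and w_admissible: "\<forall>k. Suc k < length w \<longrightarrow> A (w ! k) (w ! Suc k) = 1"
      by (simp_all add: Bstar_def)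
    have len: "Suc n < length w"
      using length_concat_map_upt_ge[of "\<lambda>i. \<omega> (y i)" "Suc (Suc n)", OF codeword_nonempty_range[OF range]]
      by (simp add: w_def o_def)
    have code_map_nth: "code_map y m = w ! m" if "m < length w" for m
    proof -
      have "code_map y m = prepend w (code_map ((shift ^^ Suc (Suc n)) y)) m"
        unfolding w_def by (rule fun_cong[OF code_map_eq_prepend_upt[OF range]])
      also have "\<dots> = w ! m" using that by (simp add: prepend_def)
      finally show ?thesis .
    qed
    have "w ! n \<in> {1..N}" using w_symbols len by (meson Suc_lessD nth_mem subsetD)
    with w_admissible len show ?thesis by (simp add: code_map_nth)
  qed
  then show ?thesis by (simp add: XA_def)
qed

lemma in_XA_if_code_map_in_XA:
  assumes range: "range y \<subseteq> {1..M}" and "code_map y \<in> XA N A"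
  shows "y \<in> XA M AC"
proof -
  have "AC (y n) (y (Suc n)) = 1" for n
  proof -
    define a where "a = \<omega> (y n)"
    define b where "b = \<omega> (y (Suc n))"
    define x where "x = code_map ((shift ^^ n) y)"
    have range_n: "range ((shift ^^ k) y) \<subseteq> {1..M}" for k
      using range by (rule range_funpow_shift)
    have "code_map y = prepend (concat (map \<omega> (map y [0..<n]))) x"
      unfolding x_def by (rule code_map_eq_prepend_upt[OF range])
    then have "x \<in> XA N A"
      using funpow_shift_in_XA[OF assms(2)] funpow_shift_prepend by metis
    moreover have "x = prepend a (prepend b (code_map (shift (shift ((shift ^^ n) y)))))"
    proof -
      have "x = prepend a (code_map (shift ((shift ^^ n) y)))"
        unfolding x_def a_def using code_map_unfold[OF range_n[of n]] by (simp add: funpow_shift)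
      also have "code_map (shift ((shift ^^ n) y)) = prepend b (code_map (shift (shift ((shift ^^ n) y))))"
        unfolding b_def using code_map_unfold[OF range_n[of "Suc n"]] by (simp add: funpow_shift shift_def)
      finally show ?thesis .
    qed
    moreover have "a \<noteq> []" "b \<noteq> []"
      unfolding a_def b_def using range by (rule codeword_nonempty_range)+
    ultimately have "x (length a - 1) = last a" and "x (Suc (length a - 1)) = hd b"
      using prepend_last[of a] by (simp_all add: prepend_length prepend_hd)
    moreover have "A (x k) (x (Suc k)) = 1" for k
      using \<open>x \<in> XA N A\<close> by (simp add: XA_def)
    ultimately have "A (last a) (hd b) = 1" by metis
    then show ?thesis by (simp add: a_def b_def code_matrix_def)
  qed
  with range show ?thesis by (simp add: XA_def image_subset_iff)
qed

lemma code_map_first_symbol: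
  assumes "range y \<subseteq> {1..M}" and "i \<in> {1..M}"
    and "map (code_map y) [0..<length (\<omega> i)] = \<omega> i"
  shows "y 0 = i"
  using codeword_prefix_unique[of "y 0" i] code_map_begins_with_codeword[OF assms(1)] assms
  by blast

lemma code_map_eq_imp_first_eq:
  assumes "range y \<subseteq> {1..M}" and "range y' \<subseteq> {1..M}" and "code_map y = code_map y'"
  shows "y 0 = y' 0"
proof (rule code_map_first_symbol[OF assms(1)])
  show "y' 0 \<in> {1..M}" using assms(2) by blast
  show "map (code_map y) [0..<length (\<omega> (y' 0))] = \<omega> (y' 0)"
    using code_map_begins_with_codeword[OF assms(2)] assms(3) by simp
qed

lemma code_map_eq_imp_eq:
  assumes "range y \<subseteq> {1..M}" and "range y' \<subseteq> {1..M}" and "code_map y = code_map y'"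
  shows "y = y'"
proof
  fix n
  show "y n = y' n"
    using assms
  proof (induction n arbitrary: y y')
    case 0
    then show ?case by (rule code_map_eq_imp_first_eq)
  next
    case (Suc n)
    then have "y 0 = y' 0" by (intro code_map_eq_imp_first_eq)
    have "range (shift y) \<subseteq> {1..M}" "range (shift y') \<subseteq> {1..M}"
      using Suc.prems by (auto simp: shift_def)
    moreover have "code_map (shift y) = code_map (shift y')"
      using Suc.prems \<open>y 0 = y' 0\<close> by (simp add: code_map_shift)
    ultimately have "shift y n = shift y' n" by (rule Suc.IH)
    then show ?case by (simp add: shift_def)
  qed
qed

lemma codeword_prefix_exists:
  assumes "x \<in> XA N A"
  shows "\<exists>i\<in>{1..M}. map x [0..<length (\<omega> i)] = \<omega> i"
proof -
  obtain \<eta> ks where ks: "set ks \<subseteq> {1..M}"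
    and decomposition: "map x [0..<Suc max_length] @ \<eta> = concat (map \<omega> ks)"
    using complete[OF map_upt_in_Bstar[OF assms]] by blast
  then obtain i ks' where "ks = i # ks'" by (cases ks) auto
  with ks decomposition have i: "i \<in> {1..M}"
    and "take (length (\<omega> i)) (map x [0..<Suc max_length] @ \<eta>) = \<omega> i"
    by auto
  moreover have "length (\<omega> i) \<le> Suc max_length" using length_codeword_le[OF i] by simp
  ultimately have "map x [0..<length (\<omega> i)] = \<omega> i" by (simp add: take_map take_upt del: upt_Suc)
  with i show ?thesis by blast
qed

lemma code_map_surj:
  assumes "x \<in> XA N A"
  shows "\<exists>y\<in>XA M AC. code_map y = x"
proof -
  have "\<exists>i\<in>{1..M}. \<exists>x'\<in>XA N A. \<omega> i \<noteq> [] \<and> x = prepend (\<omega> i) x'" if x: "x \<in> XA N A" for x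
  proof -
    obtain i where i: "i \<in> {1..M}" and prefix: "map x [0..<length (\<omega> i)] = \<omega> i"
      using codeword_prefix_exists[OF x] by blast
    have "x = prepend (\<omega> i) ((shift ^^ length (\<omega> i)) x)"
      using prepend_map_upt[of x "length (\<omega> i)"] prefix by (simp add: funpow_shift)
    then show ?thesis
      using i codeword_nonempty[OF i] funpow_shift_in_XA[OF x] by blast
  qed
  then obtain y where range: "range y \<subseteq> {1..M}" and "code_map y = x"
    using infinite_concat_greedy_parse[of "XA N A" "{1..M}" \<omega> x] assms
    unfolding code_map_def by blast
  moreover have "y \<in> XA M AC"
    using in_XA_if_code_map_in_XA[OF range] assms \<open>code_map y = x\<close> by simp
  ultimately show ?thesis by blast
qed

lemma bij_betw_code_map: "bij_betw code_map (XA M AC) (XA N A)"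
proof (rule bij_betw_imageI)
  show "inj_on code_map (XA M AC)"
    by (rule inj_onI, rule code_map_eq_imp_eq) (auto simp: XA_def)
  show "code_map ` XA M AC = XA N A"
    using code_map_in_XA code_map_surj by blast
qed

definition decode :: "(nat \<Rightarrow> nat) \<Rightarrow> nat \<Rightarrow> nat" where
  "decode = inv_into (XA M AC) code_map"

lemma decode_code_map: "y \<in> XA M AC \<Longrightarrow> decode (code_map y) = y"
  unfolding decode_def using bij_betw_code_map by (rule bij_betw_inv_into_left)

lemma code_map_decode: "x \<in> XA N A \<Longrightarrow> code_map (decode x) = x"
  unfolding decode_def using bij_betw_code_map by (rule bij_betw_inv_into_right)

lemma decode_in_XA: "x \<in> XA N A \<Longrightarrow> decode x \<in> XA M AC"
  unfolding decode_def using bij_betw_code_map bij_betw_inv_into bij_betwE by blast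

lemma range_decode: "x \<in> XA N A \<Longrightarrow> range (decode x) \<subseteq> {1..M}"
  using decode_in_XA by (auto simp: XA_def)

lemma decode_first_symbol:
  assumes "x \<in> XA N A" and "i \<in> {1..M}" and "map x [0..<length (\<omega> i)] = \<omega> i"
  shows "decode x 0 = i"
  using code_map_first_symbol[OF range_decode[OF assms(1)] assms(2)] assms(3)
  by (simp add: code_map_decode[OF assms(1)])

lemma decode_shift:
  assumes "x \<in> XA N A"
  shows "decode ((shift ^^ length (\<omega> (decode x 0))) x) = shift (decode x)"
proof -
  have "code_map (shift (decode x)) = (shift ^^ length (\<omega> (decode x 0))) x"
    using code_map_shift[OF range_decode[OF assms]] code_map_decode[OF assms] by simp
  then show ?thesis
    using decode_code_map[OF shift_in_XA[OF decode_in_XA[OF assms]]] by simp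
qed

lemma decode_first_local:
  assumes "x \<in> XA N A" and "z \<in> XA N A" and "\<forall>i<max_length. z i = x i"
  shows "decode z 0 = decode x 0"
proof (rule decode_first_symbol[OF assms(2)])
  have i: "decode x 0 \<in> {1..M}" using range_decode[OF assms(1)] by blast
  show "decode x 0 \<in> {1..M}" by (rule i)
  have "map x [0..<length (\<omega> (decode x 0))] = \<omega> (decode x 0)"
    using code_map_begins_with_codeword[OF range_decode[OF assms(1)]] code_map_decode[OF assms(1)]
    by simp
  moreover have "map z [0..<length (\<omega> (decode x 0))] = map x [0..<length (\<omega> (decode x 0))]"
    using assms(3) length_codeword_le[OF i] by simp
  ultimately show "map z [0..<length (\<omega> (decode x 0))] = \<omega> (decode x 0)" by simp
qed

lemma decode_local:
  assumes "x \<in> XA N A" and "z \<in> XA N A" and "\<forall>i<max_length * Suc k. z i = x i"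
  shows "decode z k = decode x k"
  using assms
proof (induction k arbitrary: x z)
  case 0
  then show ?case by (intro decode_first_local) simp_all
next
  case (Suc k)
  have first: "decode z 0 = decode x 0"
    using Suc.prems by (intro decode_first_local) simp_all
  define l where "l = length (\<omega> (decode x 0))"
  have "l \<le> max_length"
    unfolding l_def using range_decode[OF Suc.prems(1)] by (intro length_codeword_le) blast
  have "\<forall>i<max_length * Suc k. (shift ^^ l) z i = (shift ^^ l) x i"
  proof (intro allI impI)
    fix i assume "i < max_length * Suc k"
    with \<open>l \<le> max_length\<close> have "i + l < max_length * Suc (Suc k)" by simp
    then show "(shift ^^ l) z i = (shift ^^ l) x i"
      using Suc.prems(3) by (simp add: funpow_shift)
  qed
  then have "decode ((shift ^^ l) z) k = decode ((shift ^^ l) x) k"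
    using Suc.prems(1,2) by (intro Suc.IH funpow_shift_in_XA)
  then show ?case
    using decode_shift[OF Suc.prems(1)] decode_shift[OF Suc.prems(2)] first
    by (simp add: l_def shift_def)
qed

lemma map_decode_upt_local:
  assumes "x \<in> XA N A" and "z \<in> XA N A" and "\<forall>i<max_length * k. z i = x i"
  shows "map (decode z) [0..<k] = map (decode x) [0..<k]"
proof (rule map_cong[OF refl])
  fix j assume "j \<in> set [0..<k]"
  then have "max_length * Suc j \<le> max_length * k" by (intro mult_le_mono2) simp
  then show "decode z j = decode x j"
    using assms by (intro decode_local) auto
qed

lemma homeomorphic_maps_code_map_decode:
  "homeomorphic_maps (topXA M AC) (topXA N A) code_map decode"
  unfolding homeomorphic_maps_def
proof (intro conjI ballI)
  show "continuous_map (topXA M AC) (topXA N A) code_map"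
  proof (rule continuous_map_into_topXA)
    show "code_map y \<in> XA N A" if "y \<in> XA M AC" for y using that by (rule code_map_in_XA)
    fix k
    have "code_map z k = code_map y k" if "\<forall>i<Suc k. z i = y i" for y z
    proof -
      have "map (\<lambda>n. \<omega> (z n)) [0..<Suc k] = map (\<lambda>n. \<omega> (y n)) [0..<Suc k]"
        using that by (simp del: upt_Suc)
      then show ?thesis by (simp only: code_map_def infinite_concat_def)
    qed
    then show "\<exists>n. \<forall>y\<in>XA M AC. \<forall>z\<in>XA M AC. (\<forall>i<n. z i = y i) \<longrightarrow> code_map z k = code_map y k"
      by blast
  qed
  show "continuous_map (topXA N A) (topXA M AC) decode"
  proof (rule continuous_map_into_topXA)
    show "decode x \<in> XA M AC" if "x \<in> XA N A" for x using that by (rule decode_in_XA)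
    show "\<exists>n. \<forall>x\<in>XA N A. \<forall>z\<in>XA N A. (\<forall>i<n. z i = x i) \<longrightarrow> decode z k = decode x k" for k
      by (intro exI ballI impI decode_local)
  qed
qed (simp_all add: decode_code_map code_map_decode)

section \<open>Orbit equivalence\<close>

lemma shift_code_map_recode:
  assumes range: "range y \<subseteq> {1..M}" and js: "set js \<subseteq> {1..M}" and "0 < L"
    and recode: "tl (concat (map \<omega> (map y [0..<L]))) = concat (map \<omega> js)"
  shows "shift (code_map y) = code_map (prepend js ((shift ^^ L) y))"
proof -
  have nonempty: "concat (map \<omega> (map y [0..<L])) \<noteq> []"
    using \<open>0 < L\<close> codeword_nonempty_range[OF range, of 0] by (simp add: upt_conv_Cons)
  have "shift (code_map y) = prepend (concat (map \<omega> js)) (code_map ((shift ^^ L) y))"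
    by (subst code_map_eq_prepend_upt[OF range, of L]) (simp only: shift_prepend[OF nonempty] recode)
  also have "\<dots> = code_map (prepend js ((shift ^^ L) y))"
    using range js by (intro code_map_prepend[symmetric]) (auto simp: funpow_shift)
  finally show ?thesis .
qed

lemma decode_shift_recode:
  assumes x: "x \<in> XA N A" and js: "set js \<subseteq> {1..M}" and "0 < L"
    and recode: "tl (concat (map \<omega> (map (decode x) [0..<L]))) = concat (map \<omega> js)"
  shows "(shift ^^ length js) (decode (shift x)) = (shift ^^ L) (decode x)"
proof -
  define y where "y = prepend js ((shift ^^ L) (decode x))"
  have range: "range y \<subseteq> {1..M}"
    unfolding y_def using js range_decode[OF x] by (intro range_prepend range_funpow_shift)
  have "code_map y = shift (code_map (decode x))"
    unfolding y_def by (rule shift_code_map_recode[OF range_decode[OF x] js \<open>0 < L\<close> recode, symmetric])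
  also have "\<dots> = shift x" by (simp only: code_map_decode[OF x])
  finally have "code_map y = shift x" .
  then have "y \<in> XA M AC"
    using in_XA_if_code_map_in_XA[OF range] shift_in_XA[OF x] by simp
  then have "decode (shift x) = y"
    using decode_code_map[of y] \<open>code_map y = shift x\<close> by simp
  then show ?thesis by (simp add: y_def)
qed

definition shift_recodable :: "nat \<Rightarrow> bool" where
  "shift_recodable L \<longleftrightarrow> 0 < L \<and> (\<forall>ks. length ks = L \<longrightarrow> ks \<in> Bstar M AC \<longrightarrow>
     (\<exists>js. set js \<subseteq> {1..M} \<and> tl (concat (map \<omega> ks)) = concat (map \<omega> js)))"

lemma shift_recodable_if_right_markov_code:
  assumes "right_markov_code N A M \<omega>"
  shows "\<exists>L. shift_recodable L"
proof -
  have "\<exists>L\<ge>1. \<forall>ks. length ks = L \<longrightarrow> set ks \<subseteq> {1..M} \<longrightarrow> concat (map \<omega> ks) \<in> Bstar N A \<longrightarrow>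
      (\<exists>js. set js \<subseteq> {1..M} \<and> tl (\<omega> (hd ks)) @ concat (map \<omega> (tl ks)) = concat (map \<omega> js))"
    using assms unfolding right_markov_code_def by (elim conjE) assumption
  then obtain L where "L \<ge> 1" and ii: "\<And>ks. length ks = L \<Longrightarrow> set ks \<subseteq> {1..M} \<Longrightarrow>
      concat (map \<omega> ks) \<in> Bstar N A \<Longrightarrow>
      \<exists>js. set js \<subseteq> {1..M} \<and> tl (\<omega> (hd ks)) @ concat (map \<omega> (tl ks)) = concat (map \<omega> js)"
    by blast
  have "\<exists>js. set js \<subseteq> {1..M} \<and> tl (concat (map \<omega> ks)) = concat (map \<omega> js)"
    if "length ks = L" and ks: "ks \<in> Bstar M AC" for ks
  proof -
    from that \<open>L \<ge> 1\<close> obtain k ks' where "ks = k # ks'" by (cases ks) auto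
    moreover have "set ks \<subseteq> {1..M}" using ks by (simp add: Bstar_def)
    ultimately have "tl (concat (map \<omega> ks)) = tl (\<omega> (hd ks)) @ concat (map \<omega> (tl ks))"
      using codeword_nonempty[of k] by simp
    with ii[OF \<open>length ks = L\<close> \<open>set ks \<subseteq> {1..M}\<close> concat_codewords_in_Bstar[OF ks]]
    show ?thesis by simp
  qed
  with \<open>L \<ge> 1\<close> have "shift_recodable L" by (simp add: shift_recodable_def)
  then show ?thesis ..
qed

lemma decode_orbit_shift:
  assumes "shift_recodable L"
  shows "\<exists>k. continuous_map (topXA N A) (discrete_topology UNIV) k \<and>
    (\<forall>x\<in>XA N A. (shift ^^ k x) (decode (shift x)) = (shift ^^ L) (decode x))"
proof -
  have "0 < L" using assms by (simp add: shift_recodable_def)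
  define J where "J ks = (SOME js. set js \<subseteq> {1..M} \<and> tl (concat (map \<omega> ks)) = concat (map \<omega> js))"
    for ks
  have J: "set (J ks) \<subseteq> {1..M} \<and> tl (concat (map \<omega> ks)) = concat (map \<omega> (J ks))"
    if "length ks = L" and "ks \<in> Bstar M AC" for ks
  proof -
    have "\<exists>js. set js \<subseteq> {1..M} \<and> tl (concat (map \<omega> ks)) = concat (map \<omega> js)"
      using assms that unfolding shift_recodable_def by blast
    then show ?thesis unfolding J_def by (rule someI_ex)
  qed
  define k where "k x = length (J (map (decode x) [0..<L]))" for x
  show ?thesis
  proof (intro exI[of _ k] conjI ballI)
    show "continuous_map (topXA N A) (discrete_topology UNIV) k"
    proof (rule continuous_map_topXA_discrete[where n = "max_length * L"])
      show "k z = k x" if "x \<in> XA N A" "z \<in> XA N A" "\<forall>i<max_length * L. z i = x i" for x z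
        unfolding k_def using map_decode_upt_local[OF that] by (simp only:)
    qed simp
    fix x assume x: "x \<in> XA N A"
    have "map (decode x) [0..<L] \<in> Bstar M AC"
      using decode_in_XA[OF x] by (rule map_upt_in_Bstar)
    then have Jx: "set (J (map (decode x) [0..<L])) \<subseteq> {1..M} \<and>
        tl (concat (map \<omega> (map (decode x) [0..<L]))) = concat (map \<omega> (J (map (decode x) [0..<L])))"
      by (intro J) simp_all
    show "(shift ^^ k x) (decode (shift x)) = (shift ^^ L) (decode x)"
      unfolding k_def using decode_shift_recode[OF x conjunct1[OF Jx] \<open>0 < L\<close> conjunct2[OF Jx]] .
  qed
qed

lemma cont_orbit_equiv_if_shift_recodable:
  assumes "shift_recodable L"
  shows "cont_orbit_equiv M AC N A"
proof -
  obtain k where k: "continuous_map (topXA N A) (discrete_topology UNIV) k"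
    and orbit: "\<And>x. x \<in> XA N A \<Longrightarrow> (shift ^^ k x) (decode (shift x)) = (shift ^^ L) (decode x)"
    using decode_orbit_shift[OF assms] by blast
  show ?thesis
    unfolding cont_orbit_equiv_def
  proof (rule exI[of _ code_map], rule exI[of _ decode], rule exI[of _ "\<lambda>_. 0"],
      rule exI[of _ "\<lambda>y. length (\<omega> (y 0))"], rule exI[of _ k], rule exI[of _ "\<lambda>_. L"],
      intro conjI ballI)
    show "homeomorphic_maps (topXA M AC) (topXA N A) code_map decode"
      by (rule homeomorphic_maps_code_map_decode)
    show "continuous_map (topXA M AC) (discrete_topology UNIV) (\<lambda>_. 0)"
      and "continuous_map (topXA N A) (discrete_topology UNIV) (\<lambda>_. L)"
      by simp_all
    show "continuous_map (topXA M AC) (discrete_topology UNIV) (\<lambda>y. length (\<omega> (y 0)))"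
      by (rule continuous_map_topXA_discrete[where n = 1]) simp_all
    show "continuous_map (topXA N A) (discrete_topology UNIV) k" by (rule k)
    show "(shift ^^ 0) (code_map (shift y)) = (shift ^^ length (\<omega> (y 0))) (code_map y)"
      if "y \<in> XA M AC" for y
      using code_map_shift[of y] that by (simp add: XA_def image_subset_iff)
    show "(shift ^^ k x) (decode (shift x)) = (shift ^^ L) (decode x)" if "x \<in> XA N A" for x
      using that by (rule orbit)
  qed
qed

end

lemma complete_prefix_code_if_right_markov_code:
  assumes "right_markov_code N A M \<omega>"
  shows "complete_prefix_code N A M \<omega>"
proof
  show "inj_on \<omega> {1..M}" and "is_prefix_code N A (\<omega> ` {1..M})"
    using assms by (simp_all add: right_markov_code_def)
  have "\<forall>\<gamma>\<in>Bstar N A. \<exists>\<eta>. \<gamma> @ \<eta> \<in> Bstar N A \<and> (\<exists>!ks. set ks \<subseteq> {1..M} \<and> \<gamma> @ \<eta> = concat (map \<omega> ks))"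
    using assms unfolding right_markov_code_def by (elim conjE) assumption
  then show "\<exists>\<eta> ks. set ks \<subseteq> {1..M} \<and> \<gamma> @ \<eta> = concat (map \<omega> ks)" if "\<gamma> \<in> Bstar N A" for \<gamma>
    using that by (meson ex1_implies_ex)
qed

theorem mainTheorem2:
  fixes N M :: nat and A :: "nat \<Rightarrow> nat \<Rightarrow> nat" and \<omega> :: "nat \<Rightarrow> nat list"
  assumes "zero_one_matrix N A"
    and "irreducible_matrix N A"
    and "\<not> permutation_matrix N A"
    and "right_markov_code N A M \<omega>"
  shows "cont_orbit_equiv M (code_matrix A \<omega>) N A"
proof -
  interpret complete_prefix_code N A M \<omega>
    using assms(4) by (rule complete_prefix_code_if_right_markov_code)
  obtain L where "shift_recodable L"
    using shift_recodable_if_right_markov_code[OF assms(4)] ..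
  then show ?thesis by (rule cont_orbit_equiv_if_shift_recodable)
qed

end
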